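(* Let $p$ (true dynamics) and $\hat p$ (learned model) be dynamics kernels, $\pi_D$ and $\pi$ policies, and $k\ge0$ an integer. Suppose $\sup_{s\in\mathcal S} D_{TV}\big(\pi_D(\cdot\mid s),\pi(\cdot\mid s)\big)\le\epsilon_\pi$, and suppose that, for the branched construction with pre-branch pair $(\pi_D,p)$ and post-branch pair $(\pi,p)$ and branch length $k$, for every $t\ge0$ and every $i$ with $m_t\le i<t$, $$\mathbb E_{s\sim \nu_{t,i},\,a\sim\pi(\cdot\mid s)}\Big[D_{TV}\big(p(\cdot\mid s,a),\hat p(\cdot\mid s,a)\big)\Big]\le\epsilon_{m'},$$ where $\nu_{t,i}$ is the law of $s_i$ in that construction. Let $\eta[\pi]=\eta(\pi,p)$ and $\eta^{\mathrm{branch}}[\pi]=\eta_k(\pi_D,p;\pi,\hat p)$. Then $$\eta[\pi]\ \ge\ \eta^{\mathrm{branch}}[\pi]-2r_{\max}\left[\frac{\gamma^{k+1}\epsilon_\pi}{(1-\gamma)^2}+\frac{\gamma^{k}\epsilon_\pi}{1-\gamma}+\frac{k}{1-\gamma}\,\epsilon_{m'}\right].$$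
   Context: Let $\mathcal S$ and $\mathcal A$ be countable (e.g. finite) state and action spaces, $\rho_0$ a probability distribution on $\mathcal S$ (initial state distribution), $\gamma\in(0,1)$ a discount factor, and $r:\mathcal S\times\mathcal A\to\mathbb R$ a reward function with $|r(s,a)|\le r_{\max}$ for all $(s,a)$. A policy is a Markov kernel $\pi(a\mid s)$ from $\mathcal S$ to $\mathcal A$; a dynamics kernel is a Markov kernel $q(s'\mid s,a)$ from $\mathcal S\times\mathcal A$ to $\mathcal S$. For a policy $\pi$ and dynamics $q$, the return is $\eta(\pi,q)=\sum_{t\ge0}\gamma^t\,\mathbb E[r(s_t,a_t)]$, where $s_0\sim\rho_0$, $a_t\sim\pi(\cdot\mid s_t)$, $s_{t+1}\sim q(\cdot\mid s_t,a_t)$. For probability distributions $\mu,\nu$ on a countable set, $D_{TV}(\mu,\nu)=\frac12\sum_x|\mu(x)-\nu(x)|$. Branched return: given a "pre-branch" pair (policy $\pi^{\mathrm{pre}}$, dynamics $q^{\mathrm{pre}}$), a "post-branch" pair (policy $\pi^{\mathrm{post}}$, dynamics $q^{\mathrm{post}}$) and an integer $k\ge0$, for each $t\ge0$ let $m_t=\max(t-k,0)$ and generate $s_0\sim\rho_0$; for $0\le i<m_t$: $a_i\sim\pi^{\mathrm{pre}}(\cdot\mid s_i)$, $s_{i+1}\sim q^{\mathrm{pre}}(\cdot\mid s_i,a_i)$; for $m_t\le i<t$: $a_i\sim\pi^{\mathrm{post}}(\cdot\mid s_i)$, $s_{i+1}\sim q^{\mathrm{post}}(\cdot\mid s_i,a_i)$;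 finally $a_t\sim\pi^{\mathrm{post}}(\cdot\mid s_t)$. Let $d_t$ be the law of $(s_t,a_t)$ so produced. The $k$-branched return is $\eta_k(\pi^{\mathrm{pre}},q^{\mathrm{pre}};\pi^{\mathrm{post}},q^{\mathrm{post}})=\sum_{t\ge0}\gamma^t\,\mathbb E_{(s,a)\sim d_t}[r(s,a)]$. (Thus the state at time $t$ is obtained by following the pre-branch pair up to time $t-k$ and then the post-branch pair for the remaining at most $k$ steps; note $\eta_k(\pi,q;\pi,q)=\eta(\pi,q)$.) *)

theory Defs
  imports "HOL-Probability.Probability"
begin

definition dTV :: "'x pmf \<Rightarrow> 'x pmf \<Rightarrow> real" where
  "dTV \<mu> \<nu> = (1/2) * infsum (\<lambda>x. \<bar>pmf \<mu> x - pmf \<nu> x\<bar>) UNIV"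

definition step :: "('s \<Rightarrow> 'a pmf) \<Rightarrow> ('s \<Rightarrow> 'a \<Rightarrow> 's pmf) \<Rightarrow> 's pmf \<Rightarrow> 's pmf" where
  "step pol q \<mu> = \<mu> \<bind> (\<lambda>s. pol s \<bind> (\<lambda>a. q s a))"

text \<open>Law nu_{t,i} of s_i in the branched construction for time t (m_t = t - k, truncated).\<close>
definition branch_state ::
  "'s pmf \<Rightarrow> nat \<Rightarrow> ('s \<Rightarrow> 'a pmf) \<Rightarrow> ('s \<Rightarrow> 'a \<Rightarrow> 's pmf) \<Rightarrow>
   ('s \<Rightarrow> 'a pmf) \<Rightarrow> ('s \<Rightarrow> 'a \<Rightarrow> 's pmf) \<Rightarrow> nat \<Rightarrow> nat \<Rightarrow> 's pmf" where
  "branch_state \<rho>0 k pre qpre post qpost t i =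
     (if i \<le> t - k then (step pre qpre ^^ i) \<rho>0
      else (step post qpost ^^ (i - (t - k))) ((step pre qpre ^^ (t - k)) \<rho>0))"

definition branch_sa ::
  "'s pmf \<Rightarrow> nat \<Rightarrow> ('s \<Rightarrow> 'a pmf) \<Rightarrow> ('s \<Rightarrow> 'a \<Rightarrow> 's pmf) \<Rightarrow>
   ('s \<Rightarrow> 'a pmf) \<Rightarrow> ('s \<Rightarrow> 'a \<Rightarrow> 's pmf) \<Rightarrow> nat \<Rightarrow> ('s \<times> 'a) pmf" where
  "branch_sa \<rho>0 k pre qpre post qpost t =
     branch_state \<rho>0 k pre qpre post qpost t t \<bind> (\<lambda>s. map_pmf (\<lambda>a. (s, a)) (post s))"

definition branched_return ::
  "'s pmf \<Rightarrow> real \<Rightarrow> ('s \<Rightarrow> 'a \<Rightarrow> real) \<Rightarrow> nat \<Rightarrow> ('s \<Rightarrow> 'a pmf) \<Rightarrow> ('s \<Rightarrow> 'a \<Rightarrow> 's pmf) \<Rightarrow>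
   ('s \<Rightarrow> 'a pmf) \<Rightarrow> ('s \<Rightarrow> 'a \<Rightarrow> 's pmf) \<Rightarrow> real" where
  "branched_return \<rho>0 \<gamma> r k pre qpre post qpost =
     (\<Sum>t. \<gamma> ^ t * measure_pmf.expectation (branch_sa \<rho>0 k pre qpre post qpost t) (\<lambda>(s, a). r s a))"

definition state_law :: "'s pmf \<Rightarrow> ('s \<Rightarrow> 'a pmf) \<Rightarrow> ('s \<Rightarrow> 'a \<Rightarrow> 's pmf) \<Rightarrow> nat \<Rightarrow> 's pmf" where
  "state_law \<rho>0 pol q t = (step pol q ^^ t) \<rho>0"

definition return :: "'s pmf \<Rightarrow> real \<Rightarrow> ('s \<Rightarrow> 'a \<Rightarrow> real) \<Rightarrow> ('s \<Rightarrow> 'a pmf) \<Rightarrow> ('s \<Rightarrow> 'a \<Rightarrow> 's pmf) \<Rightarrow> real" where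
  "return \<rho>0 \<gamma> r pol q =
     (\<Sum>t. \<gamma> ^ t * measure_pmf.expectation
        (state_law \<rho>0 pol q t \<bind> (\<lambda>s. map_pmf (\<lambda>a. (s, a)) (pol s))) (\<lambda>(s, a). r s a))"

end

theory Submission
  imports Defs
begin

text \<open>Both chains run on the true dynamics until the branch point \<open>t - k\<close>; before it they differ
  only in the policy (\<open>\<pi>D\<close> versus \<open>\<pi>\<close>), afterwards only in the dynamics (\<open>p\<close> versus \<open>phat\<close>).
  Every policy step costs at most \<open>\<epsilon>\<pi>\<close> in total variation and every model step at most the expected
  model error, so the state laws at time \<open>t\<close> are within \<open>(t - k) \<epsilon>\<pi> + k \<epsilon>m\<close> of each other and the
  expected rewards within twice \<open>rmax\<close> times that.  Summing with weights \<open>\<gamma>^t\<close> and using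
  \<open>\<Sum>t. \<gamma>^t (t - k) = \<gamma>^(k+1) / (1 - \<gamma>)^2\<close> gives the claim, even without the term \<open>\<gamma>^k \<epsilon>\<pi> / (1 - \<gamma>)\<close>.\<close>

no_notation Infinite_Sum.abs_summable_on (infixr \<open>abs'_summable'_on\<close> 46)

lemma abs_expectation_le:
  fixes f :: "'x \<Rightarrow> real"
  assumes "\<And>x. \<bar>f x\<bar> \<le> B"
  shows "\<bar>measure_pmf.expectation \<mu> f\<bar> \<le> B"
proof -
  have "\<bar>measure_pmf.expectation \<mu> f\<bar> \<le> measure_pmf.expectation \<mu> (\<lambda>x. \<bar>f x\<bar>)"
    by (rule integral_abs_bound)
  also have "\<dots> \<le> measure_pmf.expectation \<mu> (\<lambda>x. B)"
    by (rule integral_mono)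
       (auto simp: assms intro!: measure_pmf.integrable_const_bound[where B=B] AE_pmfI)
  finally show ?thesis by simp
qed

lemma expectation_bind_pmf:
  fixes f :: "'y \<Rightarrow> real"
  assumes "\<And>y. \<bar>f y\<bar> \<le> B"
  shows "measure_pmf.expectation (bind_pmf \<mu> K) f
           = measure_pmf.expectation \<mu> (\<lambda>x. measure_pmf.expectation (K x) f)"
  unfolding measure_pmf_bind
  by (rule integral_bind[where K="count_space UNIV" and B=B and B'=1])
     (auto simp: assms space_subprob_algebra
           intro!: prob_space_imp_subprob_space measure_pmf.prob_space_axioms AE_pmfI)

lemma abs_summable_pmf_diff: "(\<lambda>x. \<bar>pmf \<mu> x - pmf \<nu> x\<bar>) abs_summable_on UNIV"
  by (rule abs_summable_on_comparison_test'[where g="\<lambda>x. pmf \<mu> x + pmf \<nu> x"])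
     (auto simp: abs_le_iff intro: add_increasing add_increasing2)

lemma dTV_eq_infsetsum: "dTV \<mu> \<nu> = infsetsum (\<lambda>x. \<bar>pmf \<mu> x - pmf \<nu> x\<bar>) UNIV / 2"
  unfolding dTV_def infsetsum_infsum[OF abs_summable_pmf_diff] by simp

lemma dTV_commute: "dTV \<mu> \<nu> = dTV \<nu> \<mu>"
  unfolding dTV_def by (simp add: abs_minus_commute)

lemma dTV_nonneg: "0 \<le> dTV \<mu> \<nu>"
  unfolding dTV_def by (auto intro!: infsum_nonneg)

lemma dTV_le_1: "dTV \<mu> \<nu> \<le> 1"
proof -
  have "infsetsum (\<lambda>x. \<bar>pmf \<mu> x - pmf \<nu> x\<bar>) UNIV \<le> infsetsum (\<lambda>x. pmf \<mu> x + pmf \<nu> x) UNIV"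
    by (rule infsetsum_mono)
       (use abs_summable_pmf_diff in \<open>auto simp: abs_le_iff intro: add_increasing add_increasing2\<close>)
  also have "\<dots> = 2"
    by (subst infsetsum_add) (auto simp: infsetsum_pmf_eq_1)
  finally show ?thesis
    by (simp add: dTV_eq_infsetsum)
qed

lemma abs_expectation_diff_le_dTV:
  fixes f :: "'x \<Rightarrow> real"
  assumes f: "\<And>x. \<bar>f x\<bar> \<le> B"
  shows "\<bar>measure_pmf.expectation \<mu> f - measure_pmf.expectation \<nu> f\<bar> \<le> 2 * B * dTV \<mu> \<nu>"
proof -
  have B: "0 \<le> B"
    using f[of undefined] by simp
  have summable: "(\<lambda>x. pmf \<xi> x * f x) abs_summable_on UNIV" for \<xi>
    by (rule abs_summable_on_comparison_test'[where g="\<lambda>x. B * pmf \<xi> x"])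
       (use f B in \<open>auto simp: abs_mult mult.commute[of B] intro!: mult_left_mono\<close>)
  have pointwise: "\<bar>pmf \<mu> x * f x - pmf \<nu> x * f x\<bar> \<le> B * \<bar>pmf \<mu> x - pmf \<nu> x\<bar>" for x
  proof -
    have "\<bar>pmf \<mu> x * f x - pmf \<nu> x * f x\<bar> = \<bar>pmf \<mu> x - pmf \<nu> x\<bar> * \<bar>f x\<bar>"
      by (simp add: left_diff_distrib[symmetric] abs_mult)
    also have "\<dots> \<le> \<bar>pmf \<mu> x - pmf \<nu> x\<bar> * B"
      by (rule mult_left_mono) (use f in auto)
    finally show ?thesis
      by (simp add: mult.commute)
  qed
  have "\<bar>measure_pmf.expectation \<mu> f - measure_pmf.expectation \<nu> f\<bar>
      = \<bar>infsetsum (\<lambda>x. pmf \<mu> x * f x - pmf \<nu> x * f x) UNIV\<bar>"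
    by (simp add: pmf_expectation_eq_infsetsum infsetsum_diff[OF summable summable])
  also have "\<dots> \<le> infsetsum (\<lambda>x. \<bar>pmf \<mu> x * f x - pmf \<nu> x * f x\<bar>) UNIV"
    using norm_infsetsum_bound[of "\<lambda>x. pmf \<mu> x * f x - pmf \<nu> x * f x" UNIV] by simp
  also have "\<dots> \<le> infsetsum (\<lambda>x. B * \<bar>pmf \<mu> x - pmf \<nu> x\<bar>) UNIV"
    using abs_summable_on_diff[OF summable summable] abs_summable_pmf_diff pointwise
    by (intro infsetsum_mono) (auto simp: abs_summable_on_def)
  also have "\<dots> = B * infsetsum (\<lambda>x. \<bar>pmf \<mu> x - pmf \<nu> x\<bar>) UNIV"
    by (rule infsetsum_cmult_right) (use abs_summable_pmf_diff in auto)
  also have "\<dots> = 2 * B * dTV \<mu> \<nu>"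
    by (simp add: dTV_eq_infsetsum)
  finally show ?thesis .
qed

text \<open>The dual (test function) form of \<open>dTV \<mu> \<nu> \<le> \<epsilon>\<close>.  It passes through \<open>bind_pmf\<close> without any
  summability bookkeeping, which is all the coupling argument needs.\<close>

definition tv_le :: "'x pmf \<Rightarrow> 'x pmf \<Rightarrow> real \<Rightarrow> bool" where
  "tv_le \<mu> \<nu> \<epsilon> \<longleftrightarrow> (\<forall>(f :: 'x \<Rightarrow> real) B. (\<forall>x. \<bar>f x\<bar> \<le> B) \<longrightarrow>
     \<bar>measure_pmf.expectation \<mu> f - measure_pmf.expectation \<nu> f\<bar> \<le> 2 * B * \<epsilon>)"

lemma tv_leI:
  assumes "\<And>(f :: 'x \<Rightarrow> real) B. (\<And>x. \<bar>f x\<bar> \<le> B) \<Longrightarrow>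
     \<bar>measure_pmf.expectation \<mu> f - measure_pmf.expectation \<nu> f\<bar> \<le> 2 * B * \<epsilon>"
  shows "tv_le \<mu> \<nu> \<epsilon>"
  unfolding tv_le_def using assms by blast

lemma tv_leD:
  "tv_le \<mu> \<nu> \<epsilon> \<Longrightarrow> (\<And>x. \<bar>f x\<bar> \<le> B) \<Longrightarrow>
     \<bar>measure_pmf.expectation \<mu> f - measure_pmf.expectation \<nu> f\<bar> \<le> 2 * B * \<epsilon>"
  unfolding tv_le_def by blast

lemma tv_le_dTV: "tv_le \<mu> \<nu> (dTV \<mu> \<nu>)"
  by (rule tv_leI) (rule abs_expectation_diff_le_dTV)

lemma tv_le_refl: "tv_le \<mu> \<mu> 0"
  by (rule tv_leI) simp

lemma tv_le_trans:
  fixes \<mu> \<nu> \<xi> :: "'x pmf"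
  assumes "tv_le \<mu> \<nu> \<epsilon>" and "tv_le \<nu> \<xi> \<delta>"
  shows "tv_le \<mu> \<xi> (\<epsilon> + \<delta>)"
proof (rule tv_leI)
  fix f :: "'x \<Rightarrow> real" and B
  assume f: "\<And>x. \<bar>f x\<bar> \<le> B"
  have "\<bar>measure_pmf.expectation \<mu> f - measure_pmf.expectation \<nu> f\<bar> \<le> 2 * B * \<epsilon>"
    using f by (rule tv_leD[OF assms(1)])
  moreover have "\<bar>measure_pmf.expectation \<nu> f - measure_pmf.expectation \<xi> f\<bar> \<le> 2 * B * \<delta>"
    using f by (rule tv_leD[OF assms(2)])
  ultimately show "\<bar>measure_pmf.expectation \<mu> f - measure_pmf.expectation \<xi> f\<bar> \<le> 2 * B * (\<epsilon> + \<delta>)"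
    by (simp add: distrib_left)
qed

lemma tv_le_mono:
  fixes \<mu> \<nu> :: "'x pmf"
  assumes "tv_le \<mu> \<nu> \<epsilon>" and "\<epsilon> \<le> \<delta>"
  shows "tv_le \<mu> \<nu> \<delta>"
proof (rule tv_leI)
  fix f :: "'x \<Rightarrow> real" and B
  assume f: "\<And>x. \<bar>f x\<bar> \<le> B"
  then have "2 * B * \<epsilon> \<le> 2 * B * \<delta>"
    using assms(2) by (intro mult_left_mono) (auto intro: order_trans[OF abs_ge_zero])
  moreover have "\<bar>measure_pmf.expectation \<mu> f - measure_pmf.expectation \<nu> f\<bar> \<le> 2 * B * \<epsilon>"
    using f by (rule tv_leD[OF assms(1)])
  ultimately show "\<bar>measure_pmf.expectation \<mu> f - measure_pmf.expectation \<nu> f\<bar> \<le> 2 * B * \<delta>"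
    by linarith
qed

lemma tv_le_bind_pmf_left:
  fixes \<mu> \<nu> :: "'x pmf" and K :: "'x \<Rightarrow> 'y pmf"
  assumes "tv_le \<mu> \<nu> \<epsilon>"
  shows "tv_le (bind_pmf \<mu> K) (bind_pmf \<nu> K) \<epsilon>"
proof (rule tv_leI)
  fix f :: "'y \<Rightarrow> real" and B
  assume f: "\<And>y. \<bar>f y\<bar> \<le> B"
  have "\<bar>measure_pmf.expectation \<mu> (\<lambda>x. measure_pmf.expectation (K x) f)
      - measure_pmf.expectation \<nu> (\<lambda>x. measure_pmf.expectation (K x) f)\<bar> \<le> 2 * B * \<epsilon>"
    by (rule tv_leD[OF assms]) (rule abs_expectation_le[OF f])
  with f show "\<bar>measure_pmf.expectation (bind_pmf \<mu> K) f - measure_pmf.expectation (bind_pmf \<nu> K) f\<bar>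
      \<le> 2 * B * \<epsilon>"
    by (simp add: expectation_bind_pmf[where B=B])
qed

lemma tv_le_bind_pmf_right:
  fixes \<mu> :: "'x pmf" and K L :: "'x \<Rightarrow> 'y pmf"
  assumes K: "\<And>x. tv_le (K x) (L x) (\<epsilon> x)" and \<epsilon>: "\<And>x. \<bar>\<epsilon> x\<bar> \<le> C"
  shows "tv_le (bind_pmf \<mu> K) (bind_pmf \<mu> L) (measure_pmf.expectation \<mu> \<epsilon>)"
proof (rule tv_leI)
  fix f :: "'y \<Rightarrow> real" and B
  assume f: "\<And>y. \<bar>f y\<bar> \<le> B"
  have integrable_expectation: "integrable \<mu> (\<lambda>x. measure_pmf.expectation (M x) f)"
    for M :: "'x \<Rightarrow> 'y pmf"
    by (rule measure_pmf.integrable_const_bound[where B=B]) (auto intro!: AE_pmfI abs_expectation_le f)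
  have "\<bar>measure_pmf.expectation (bind_pmf \<mu> K) f - measure_pmf.expectation (bind_pmf \<mu> L) f\<bar>
      = \<bar>measure_pmf.expectation \<mu>
          (\<lambda>x. measure_pmf.expectation (K x) f - measure_pmf.expectation (L x) f)\<bar>"
    using f by (simp add: expectation_bind_pmf[where B=B]
        Bochner_Integration.integral_diff[OF integrable_expectation integrable_expectation])
  also have "\<dots> \<le> measure_pmf.expectation \<mu>
      (\<lambda>x. \<bar>measure_pmf.expectation (K x) f - measure_pmf.expectation (L x) f\<bar>)"
    by (rule integral_abs_bound)
  also have "\<dots> \<le> measure_pmf.expectation \<mu> (\<lambda>x. 2 * B * \<epsilon> x)"
  proof (rule integral_mono)
    show "integrable \<mu> (\<lambda>x. \<bar>measure_pmf.expectation (K x) f - measure_pmf.expectation (L x) f\<bar>)"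
      by (intro integrable_abs Bochner_Integration.integrable_diff integrable_expectation)
    show "integrable \<mu> (\<lambda>x. 2 * B * \<epsilon> x)"
      by (intro integrable_mult_right measure_pmf.integrable_const_bound[where B=C]) (auto intro: \<epsilon>)
    show "\<bar>measure_pmf.expectation (K x) f - measure_pmf.expectation (L x) f\<bar> \<le> 2 * B * \<epsilon> x" for x
      using f by (rule tv_leD[OF K])
  qed
  finally show "\<bar>measure_pmf.expectation (bind_pmf \<mu> K) f - measure_pmf.expectation (bind_pmf \<mu> L) f\<bar>
      \<le> 2 * B * measure_pmf.expectation \<mu> \<epsilon>"
    by simp
qed

lemma tv_le_step:
  "tv_le \<mu> \<nu> \<epsilon> \<Longrightarrow> tv_le (step pol q \<mu>) (step pol q \<nu>) \<epsilon>"
  unfolding step_def by (rule tv_le_bind_pmf_left)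

lemma tv_le_funpow_step:
  "tv_le \<mu> \<nu> \<epsilon> \<Longrightarrow> tv_le ((step pol q ^^ n) \<mu>) ((step pol q ^^ n) \<nu>) \<epsilon>"
  by (induction n) (auto intro: tv_le_step)

lemma tv_le_step_policy:
  assumes "\<forall>s. dTV (pol s) (pol' s) \<le> \<epsilon>"
  shows "tv_le (step pol q \<mu>) (step pol' q \<mu>) \<epsilon>"
proof -
  have "tv_le (bind_pmf (pol s) (q s)) (bind_pmf (pol' s) (q s)) \<epsilon>" for s
    using assms by (intro tv_le_bind_pmf_left tv_le_mono[OF tv_le_dTV]) auto
  then have "tv_le (bind_pmf \<mu> (\<lambda>s. bind_pmf (pol s) (q s))) (bind_pmf \<mu> (\<lambda>s. bind_pmf (pol' s) (q s)))
      (measure_pmf.expectation \<mu> (\<lambda>s. \<epsilon>))"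
    by (rule tv_le_bind_pmf_right) auto
  then show ?thesis
    unfolding step_def by simp
qed

lemma tv_le_funpow_step_policy:
  assumes "\<forall>s. dTV (pol s) (pol' s) \<le> \<epsilon>"
  shows "tv_le ((step pol q ^^ n) \<mu>) ((step pol' q ^^ n) \<mu>) (n * \<epsilon>)"
proof (induction n)
  case 0
  show ?case by (simp add: tv_le_refl)
next
  case (Suc n)
  have "tv_le (step pol q ((step pol q ^^ n) \<mu>)) (step pol' q ((step pol' q ^^ n) \<mu>)) (n * \<epsilon> + \<epsilon>)"
    by (rule tv_le_trans[OF tv_le_step[OF Suc] tv_le_step_policy[OF assms]])
  then show ?case
    by (simp add: algebra_simps)
qed

definition model_error :: "('s \<Rightarrow> 'a pmf) \<Rightarrow> ('s \<Rightarrow> 'a \<Rightarrow> 's pmf) \<Rightarrow> ('s \<Rightarrow> 'a \<Rightarrow> 's pmf) \<Rightarrow> 's \<Rightarrow> real"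
  where "model_error pol q q' s = measure_pmf.expectation (pol s) (\<lambda>a. dTV (q s a) (q' s a))"

lemma model_error_nonneg: "0 \<le> model_error pol q q' s"
  unfolding model_error_def by (intro Bochner_Integration.integral_nonneg dTV_nonneg)

lemma abs_model_error_le_1: "\<bar>model_error pol q q' s\<bar> \<le> 1"
  unfolding model_error_def by (rule abs_expectation_le) (simp add: dTV_nonneg dTV_le_1)

lemma tv_le_step_model:
  "tv_le (step pol q \<mu>) (step pol q' \<mu>) (measure_pmf.expectation \<mu> (model_error pol q q'))"
proof -
  have "tv_le (bind_pmf (pol s) (q s)) (bind_pmf (pol s) (q' s)) (model_error pol q q' s)" for s
    unfolding model_error_def
    by (rule tv_le_bind_pmf_right[where C=1]) (auto intro: tv_le_dTV simp: dTV_nonneg dTV_le_1)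
  then show ?thesis
    unfolding step_def by (rule tv_le_bind_pmf_right) (rule abs_model_error_le_1)
qed

lemma tv_le_funpow_step_model:
  "tv_le ((step pol q ^^ n) \<mu>) ((step pol q' ^^ n) \<mu>)
     (\<Sum>i<n. measure_pmf.expectation ((step pol q ^^ i) \<mu>) (model_error pol q q'))"
proof (induction n)
  case 0
  show ?case by (simp add: tv_le_refl)
next
  case (Suc n)
  have "tv_le (step pol q ((step pol q ^^ n) \<mu>)) (step pol q' ((step pol q' ^^ n) \<mu>))
     (measure_pmf.expectation ((step pol q ^^ n) \<mu>) (model_error pol q q')
      + (\<Sum>i<n. measure_pmf.expectation ((step pol q ^^ i) \<mu>) (model_error pol q q')))"
    by (rule tv_le_trans[OF tv_le_step_model tv_le_step[OF Suc]])
  then show ?case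
    by (simp add: algebra_simps)
qed

lemma branch_state_after_branch_point:
  "t - k \<le> i \<Longrightarrow> branch_state \<rho>0 k pre qpre post qpost t i
     = (step post qpost ^^ (i - (t - k))) ((step pre qpre ^^ (t - k)) \<rho>0)"
  unfolding branch_state_def by auto

lemma state_law_split:
  "m \<le> t \<Longrightarrow> state_law \<rho>0 pol q t = (step pol q ^^ (t - m)) ((step pol q ^^ m) \<rho>0)"
  unfolding state_law_def by (metis comp_apply funpow_add le_add_diff_inverse2)

lemma model_error_bound_nonneg:
  assumes "\<forall>t i. t - k \<le> i \<and> i < t \<longrightarrow>
      measure_pmf.expectation (branch_state \<rho>0 k pre qpre pol q t i) (model_error pol q q') \<le> \<epsilon>"
    and "0 < k"
  shows "0 \<le> \<epsilon>"
proof -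
  have "measure_pmf.expectation (branch_state \<rho>0 k pre qpre pol q 1 0) (model_error pol q q') \<le> \<epsilon>"
    using assms by simp
  moreover have "0 \<le> measure_pmf.expectation (branch_state \<rho>0 k pre qpre pol q 1 0) (model_error pol q q')"
    by (intro Bochner_Integration.integral_nonneg model_error_nonneg)
  ultimately show ?thesis
    by linarith
qed

lemma sum_model_error_after_branch_point_le:
  assumes model: "\<forall>t i. t - k \<le> i \<and> i < t \<longrightarrow>
      measure_pmf.expectation (branch_state \<rho>0 k pre qpre pol q t i) (model_error pol q q') \<le> \<epsilon>"
  shows "(\<Sum>i<t - (t - k). measure_pmf.expectation ((step pol q ^^ i) ((step pre qpre ^^ (t - k)) \<rho>0))
           (model_error pol q q')) \<le> k * \<epsilon>"
proof -
  have "(\<Sum>i<t - (t - k). measure_pmf.expectation ((step pol q ^^ i) ((step pre qpre ^^ (t - k)) \<rho>0))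
      (model_error pol q q')) \<le> (\<Sum>i<t - (t - k). \<epsilon>)"
  proof (rule sum_mono)
    fix i
    assume "i \<in> {..<t - (t - k)}"
    with model[rule_format, of t "t - k + i"]
    show "measure_pmf.expectation ((step pol q ^^ i) ((step pre qpre ^^ (t - k)) \<rho>0)) (model_error pol q q')
        \<le> \<epsilon>"
      by (simp add: branch_state_after_branch_point)
  qed
  also have "\<dots> \<le> k * \<epsilon>"
  proof (cases "t - (t - k) = k")
    case False
    then show ?thesis
      using model_error_bound_nonneg[OF model] by (simp add: mult_right_mono)
  qed simp
  finally show ?thesis .
qed

lemma tv_le_state_law_branch_state:
  assumes policy: "\<forall>s. dTV (\<pi>D s) (\<pi> s) \<le> \<epsilon>\<pi>"
    and model: "\<forall>t i. t - k \<le> i \<and> i < t \<longrightarrow>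
      measure_pmf.expectation (branch_state \<rho>0 k \<pi>D p \<pi> p t i) (model_error \<pi> p phat) \<le> \<epsilon>m"
  shows "tv_le (state_law \<rho>0 \<pi> p t) (branch_state \<rho>0 k \<pi>D p \<pi> phat t t)
           (real (t - k) * \<epsilon>\<pi> + k * \<epsilon>m)"
proof -
  define m where "m = t - k"
  define \<nu> where "\<nu> = (step \<pi>D p ^^ m) \<rho>0"
  have "state_law \<rho>0 \<pi> p t = (step \<pi> p ^^ (t - m)) ((step \<pi> p ^^ m) \<rho>0)"
    by (rule state_law_split) (simp add: m_def)
  moreover have "\<forall>s. dTV (\<pi> s) (\<pi>D s) \<le> \<epsilon>\<pi>"
    using policy by (simp add: dTV_commute)
  ultimately have policy_part: "tv_le (state_law \<rho>0 \<pi> p t) ((step \<pi> p ^^ (t - m)) \<nu>) (m * \<epsilon>\<pi>)"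
    unfolding \<nu>_def by (simp add: tv_le_funpow_step tv_le_funpow_step_policy)
  have model_part: "tv_le ((step \<pi> p ^^ (t - m)) \<nu>) (branch_state \<rho>0 k \<pi>D p \<pi> phat t t)
      (\<Sum>i<t - m. measure_pmf.expectation ((step \<pi> p ^^ i) \<nu>) (model_error \<pi> p phat))"
    using tv_le_funpow_step_model by (simp add: branch_state_after_branch_point m_def \<nu>_def)
  show ?thesis
    by (rule tv_le_mono[OF tv_le_trans[OF policy_part model_part]])
       (use sum_model_error_after_branch_point_le[OF model] in \<open>simp add: m_def \<nu>_def\<close>)
qed

lemma geometric_shifted_deriv_sums:
  fixes \<gamma> :: real
  assumes "0 \<le> \<gamma>" "\<gamma> < 1"
  shows "(\<lambda>t. \<gamma> ^ t * real (t - k)) sums (\<gamma> ^ (k + 1) / (1 - \<gamma>)^2)"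
proof -
  have "(\<lambda>n. \<gamma> * (real (Suc n) * \<gamma> ^ n)) sums (\<gamma> * (1 / (1 - \<gamma>)^2))"
    by (intro sums_mult geometric_deriv_sums) (use assms in auto)
  then have "(\<lambda>n. real (Suc n) * \<gamma> ^ Suc n) sums (\<gamma> / (1 - \<gamma>)^2)"
    by (simp add: algebra_simps)
  then have "(\<lambda>n. real n * \<gamma> ^ n) sums (\<gamma> / (1 - \<gamma>)^2)"
    by (subst (asm) sums_Suc_iff) simp
  then have "(\<lambda>n. \<gamma> ^ k * (real n * \<gamma> ^ n)) sums (\<gamma> ^ k * (\<gamma> / (1 - \<gamma>)^2))"
    by (rule sums_mult)
  then have "(\<lambda>n. \<gamma> ^ (n + k) * real (n + k - k)) sums (\<gamma> ^ (k + 1) / (1 - \<gamma>)^2)"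
    by (simp add: power_add algebra_simps)
  then show ?thesis
    by (subst (asm) sums_iff_shift) simp
qed

lemma suminf_discounted_diff_le:
  fixes a b c :: "nat \<Rightarrow> real" and \<gamma> :: real
  assumes "0 \<le> \<gamma>" "\<gamma> < 1"
    and bounded: "\<And>t. \<bar>a t\<bar> \<le> M" "\<And>t. \<bar>b t\<bar> \<le> M"
    and gap: "\<And>t. b t - a t \<le> c t"
    and sums: "(\<lambda>t. \<gamma> ^ t * c t) sums D"
  shows "(\<Sum>t. \<gamma> ^ t * b t) - (\<Sum>t. \<gamma> ^ t * a t) \<le> D"
proof -
  have summable: "summable (\<lambda>t. \<gamma> ^ t * x t)" if "\<And>t. \<bar>x t\<bar> \<le> M" for x :: "nat \<Rightarrow> real"
  proof (rule summable_comparison_test[OF _ summable_mult[OF summable_geometric]])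
    show "\<exists>N. \<forall>t\<ge>N. norm (\<gamma> ^ t * x t) \<le> M * \<gamma> ^ t"
      using that assms(1) by (auto simp: abs_mult mult.commute intro!: mult_right_mono)
  qed (use assms in auto)
  have "(\<Sum>t. \<gamma> ^ t * b t) - (\<Sum>t. \<gamma> ^ t * a t) = (\<Sum>t. \<gamma> ^ t * b t - \<gamma> ^ t * a t)"
    by (intro suminf_diff summable bounded)
  also have "\<dots> \<le> (\<Sum>t. \<gamma> ^ t * c t)"
  proof (rule suminf_le)
    show "\<gamma> ^ t * b t - \<gamma> ^ t * a t \<le> \<gamma> ^ t * c t" for t
      using mult_left_mono[OF gap, of "\<gamma> ^ t" t] assms(1) by (simp add: algebra_simps)
  qed (use sums sums_summable summable bounded in \<open>auto intro: summable_diff\<close>)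
  also have "\<dots> = D"
    using sums by (simp add: sums_iff)
  finally show ?thesis .
qed

lemma sums_discounted_branch_error:
  fixes \<gamma> rmax \<epsilon>\<pi> \<epsilon>m :: real and k :: nat
  assumes "0 \<le> \<gamma>" "\<gamma> < 1"
  shows "(\<lambda>t. \<gamma> ^ t * (2 * rmax * (real (t - k) * \<epsilon>\<pi> + k * \<epsilon>m)))
           sums (2 * rmax * (\<gamma> ^ (k + 1) * \<epsilon>\<pi> / (1 - \<gamma>)^2 + real k / (1 - \<gamma>) * \<epsilon>m))"
proof -
  have "(\<lambda>t. 2 * rmax * \<epsilon>\<pi> * (\<gamma> ^ t * real (t - k)) + 2 * rmax * k * \<epsilon>m * \<gamma> ^ t)
      sums (2 * rmax * \<epsilon>\<pi> * (\<gamma> ^ (k + 1) / (1 - \<gamma>)^2) + 2 * rmax * k * \<epsilon>m * (1 / (1 - \<gamma>)))"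
    using assms by (intro sums_add sums_mult geometric_shifted_deriv_sums geometric_sums) auto
  then show ?thesis
    by (simp add: algebra_simps)
qed

theorem theorem3:
  fixes \<rho>0 :: "('s::countable) pmf"
    and r :: "'s \<Rightarrow> ('a::countable) \<Rightarrow> real"
    and p phat :: "'s \<Rightarrow> 'a \<Rightarrow> 's pmf"
    and \<pi>D \<pi> :: "'s \<Rightarrow> 'a pmf"
    and \<gamma> rmax \<epsilon>\<pi> \<epsilon>m :: real
    and k :: nat
  assumes "0 < \<gamma>" and "\<gamma> < 1"
    and "\<forall>s a. \<bar>r s a\<bar> \<le> rmax"
    and "\<forall>s. dTV (\<pi>D s) (\<pi> s) \<le> \<epsilon>\<pi>"
    and "\<forall>t i. t - k \<le> i \<and> i < t \<longrightarrow>
           measure_pmf.expectation (branch_state \<rho>0 k \<pi>D p \<pi> p t i)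
             (\<lambda>s. measure_pmf.expectation (\<pi> s) (\<lambda>a. dTV (p s a) (phat s a))) \<le> \<epsilon>m"
  shows "return \<rho>0 \<gamma> r \<pi> p \<ge> branched_return \<rho>0 \<gamma> r k \<pi>D p \<pi> phat
           - 2 * rmax * (\<gamma> ^ (k + 1) * \<epsilon>\<pi> / (1 - \<gamma>)^2 + \<gamma> ^ k * \<epsilon>\<pi> / (1 - \<gamma>)
                         + real k / (1 - \<gamma>) * \<epsilon>m)"
proof -
  define reward where
    "reward \<mu> = measure_pmf.expectation (bind_pmf \<mu> (\<lambda>s. map_pmf (\<lambda>a. (s, a)) (\<pi> s))) (\<lambda>(s, a). r s a)"
    for \<mu> :: "'s pmf"
  have r_bounded: "\<bar>case_prod r x\<bar> \<le> rmax" for x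
    using assms(3) by (auto split: prod.splits)
  have model: "\<forall>t i. t - k \<le> i \<and> i < t \<longrightarrow>
      measure_pmf.expectation (branch_state \<rho>0 k \<pi>D p \<pi> p t i) (model_error \<pi> p phat) \<le> \<epsilon>m"
    using assms(5) unfolding model_error_def[abs_def] .
  have gap: "reward (branch_state \<rho>0 k \<pi>D p \<pi> phat t t) - reward (state_law \<rho>0 \<pi> p t)
      \<le> 2 * rmax * (real (t - k) * \<epsilon>\<pi> + k * \<epsilon>m)" for t
    using tv_leD[where f="case_prod r",
        OF tv_le_bind_pmf_left[OF tv_le_state_law_branch_state[OF assms(4) model]] r_bounded]
    unfolding reward_def by (simp add: abs_le_iff)
  have "(\<Sum>t. \<gamma> ^ t * reward (branch_state \<rho>0 k \<pi>D p \<pi> phat t t))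
      - (\<Sum>t. \<gamma> ^ t * reward (state_law \<rho>0 \<pi> p t))
      \<le> 2 * rmax * (\<gamma> ^ (k + 1) * \<epsilon>\<pi> / (1 - \<gamma>)^2 + real k / (1 - \<gamma>) * \<epsilon>m)"
    using assms(1,2) r_bounded sums_discounted_branch_error[OF less_imp_le[OF assms(1)] assms(2)]
    by (intro suminf_discounted_diff_le[where M=rmax, OF _ _ _ _ gap])
       (auto simp: reward_def intro!: abs_expectation_le)
  moreover have "0 \<le> 2 * rmax * (\<gamma> ^ k * \<epsilon>\<pi> / (1 - \<gamma>))"
  proof -
    have "0 \<le> rmax" "0 \<le> \<epsilon>\<pi>"
      using assms(3,4) dTV_nonneg by (meson abs_ge_zero order_trans)+
    with assms(1,2) show ?thesis
      by simp
  qed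
  ultimately show ?thesis
    unfolding return_def branched_return_def branch_sa_def reward_def by (simp add: distrib_left)
qed

end
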